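(* Let $P,Q$ be probability mass functions supported on $\{1,\dots,n\}$ (all masses positive) with $P\prec Q$. Let $f:(0,\infty)\to\mathbb R$ be convex and twice differentiable with $f(1)=0$, and let $q_{\max},q_{\min}$ be the maximal and minimal masses of $Q$. Then: (a) $$n\,e_f(nq_{\min},nq_{\max})(\|Q\|_2^2-\|P\|_2^2)\ge D_f(Q\|U_n)-D_f(P\|U_n)\ge n\,c_f(nq_{\min},nq_{\max})(\|Q\|_2^2-\|P\|_2^2)\ge0,$$ with equalities in the first two inequalities if $D_f=\chi^2$. (b) If moreover $q_{\max}/q_{\min}\le\rho$ for some $\rho\ge1$, then $0\le\|Q\|_2^2-\|P\|_2^2\le\frac{(\rho-1)^2}{4\rho n}$.
   Context: $U_n$ is the uniform distribution on $\{1,\dots,n\}$; $\|\cdot\|_2$ is the Euclidean norm of the probability vector. $P\prec Q$ ($P$ is majorized by $Q$) means that for each $k$, the sum of the $k$ largest masses of $P$ is at most that of $Q$. $D_f(P\|Q)=\sum_xQ(x)f(P(x)/Q(x))$; $\chi^2$ corresponds to $f(t)=(t-1)^2$. With $\mathcal I(\xi_1,\xi_2)=[\xi_1,\xi_2]\cap(0,\infty)$: $c_f(\xi_1,\xi_2)=\tfrac12\inf_{t\in\mathcal I}f''(t)$, $e_f(\xi_1,\xi_2)=\tfrac12\sup_{t\in\mathcal I}f''(t)$. *)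

theory Defs
  imports "HOL-Analysis.Analysis" "HOL-Library.Extended_Real"
begin

definition pmf_on :: "nat \<Rightarrow> (nat \<Rightarrow> real) \<Rightarrow> bool" where
  "pmf_on n P \<longleftrightarrow> (\<forall>i\<in>{1..n}. P i > 0) \<and> (\<Sum>i=1..n. P i) = 1"

definition top_sum :: "nat \<Rightarrow> (nat \<Rightarrow> real) \<Rightarrow> nat \<Rightarrow> real" where
  "top_sum n P k = Max {sum P S | S. S \<subseteq> {1..n} \<and> card S = k}"

definition majorized :: "nat \<Rightarrow> (nat \<Rightarrow> real) \<Rightarrow> (nat \<Rightarrow> real) \<Rightarrow> bool" where
  "majorized n P Q \<longleftrightarrow> (\<forall>k\<in>{1..n}. top_sum n P k \<le> top_sum n Q k)"

definition sqnorm :: "nat \<Rightarrow> (nat \<Rightarrow> real) \<Rightarrow> real" where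
  "sqnorm n P = (\<Sum>i=1..n. (P i)\<^sup>2)"

definition fdiv :: "(real \<Rightarrow> real) \<Rightarrow> nat \<Rightarrow> (nat \<Rightarrow> real) \<Rightarrow> (nat \<Rightarrow> real) \<Rightarrow> real" where
  "fdiv f n P Q = (\<Sum>i=1..n. Q i * f (P i / Q i))"

definition unif :: "nat \<Rightarrow> nat \<Rightarrow> real" where
  "unif n = (\<lambda>i. 1 / real n)"

definition Iset :: "real \<Rightarrow> real \<Rightarrow> real set" where
  "Iset \<xi>1 \<xi>2 = {\<xi>1..\<xi>2} \<inter> {0<..}"

text \<open>c_f and e_f, valued in the extended reals (the supremum of f'' may be infinite).\<close>
definition c_f :: "(real \<Rightarrow> real) \<Rightarrow> real \<Rightarrow> real \<Rightarrow> ereal" where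
  "c_f f \<xi>1 \<xi>2 = ereal (1/2) * (INF t\<in>Iset \<xi>1 \<xi>2. ereal (deriv (deriv f) t))"

definition e_f :: "(real \<Rightarrow> real) \<Rightarrow> real \<Rightarrow> real \<Rightarrow> ereal" where
  "e_f f \<xi>1 \<xi>2 = ereal (1/2) * (SUP t\<in>Iset \<xi>1 \<xi>2. ereal (deriv (deriv f) t))"

end

theory Submission imports Defs begin

(* Sort Q and P decreasingly and scale by n: x i = n Q(\<sigma> i), y i = n P(\<tau> i). Majorization of P by Q
   makes y a decreasing vector majorized by x, and all entries of x and y lie in [n qmin, n qmax]. Both
   gaps become sums over x and y: \<parallel>Q\<parallel>\<^sup>2 - \<parallel>P\<parallel>\<^sup>2 = \<Sum>(x\<^sup>2 - y\<^sup>2)/n\<^sup>2 and D_f(Q\<parallel>U) - D_f(P\<parallel>U) = \<Sum>(f x - f y)/n.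
   Karamata's inequality (tangent lines at the y i combined with Abel summation) applied to the convex
   functions f - c t\<^sup>2/2 and e t\<^sup>2/2 - f, where c \<le> f'' \<le> e on [n qmin, n qmax], gives (a); for \<chi>\<^sup>2 we have
   f'' = 2 and the two sums coincide. For (b), \<parallel>P\<parallel>\<^sup>2 \<ge> 1/n and \<Sum>(Q i - qmin)(qmax - Q i) \<ge> 0 give
   \<parallel>Q\<parallel>\<^sup>2 - \<parallel>P\<parallel>\<^sup>2 \<le> (1 - n qmin)(n qmax - 1)/n, and this product is at most (\<rho>-1)\<^sup>2/(4\<rho>) when qmax \<le> \<rho> qmin. *)

lemma Abel_summation_nonneg:
  fixes w d :: "nat \<Rightarrow> real"
  assumes antitone: "\<And>i. 1 \<le> i \<Longrightarrow> i < n \<Longrightarrow> w (Suc i) \<le> w i"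
    and partial_sums: "\<And>m. m \<le> n \<Longrightarrow> 0 \<le> (\<Sum>i=1..m. d i)"
    and total: "(\<Sum>i=1..n. d i) = 0"
  shows "0 \<le> (\<Sum>i=1..n. w i * d i)"
proof -
  have "w m * (\<Sum>i=1..m. d i) \<le> (\<Sum>i=1..m. w i * d i)" if "m \<le> n" for m
    using that
  proof (induction m)
    case (Suc m)
    show ?case
    proof (cases "m = 0")
      case False
      have "w (Suc m) * (\<Sum>i=1..m. d i) \<le> w m * (\<Sum>i=1..m. d i)"
        using antitone[of m] partial_sums[of m] False Suc.prems by (intro mult_right_mono) auto
      then show ?thesis
        using Suc by (simp add: distrib_left)
    qed simp
  qed simp
  from this[of n] show ?thesis
    using total by simp
qed

lemma convex_on_deriv_mono:
  fixes f :: "real \<Rightarrow> real"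
  assumes convex: "convex_on S f" and "open S" and "u \<in> S" "v \<in> S"
    and deriv: "\<And>x. x \<in> S \<Longrightarrow> (f has_real_derivative f' x) (at x)"
  shows "0 \<le> (f' v - f' u) * (v - u)"
proof -
  have tangent: "f' c * (x - c) \<le> f x - f c" if "c \<in> S" "x \<in> S" for c x
  proof (rule convex_on_imp_above_tangent[OF convex])
    show "connected S"
      using convex by (simp add: convex_connected convex_on_imp_convex)
    show "(f has_real_derivative f' c) (at c within S)"
      using deriv[OF \<open>c \<in> S\<close>] by (rule has_field_derivative_at_within)
  qed (use that \<open>open S\<close> in \<open>simp_all add: interior_open\<close>)
  show ?thesis
    using tangent[of u v] tangent[of v u] assms by (simp add: algebra_simps)
qed

lemma convex_on_imp_deriv2_nonneg:
  fixes f :: "real \<Rightarrow> real"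
  assumes convex: "convex_on S f" and "open S" and "t \<in> S"
    and f': "\<And>x. x \<in> S \<Longrightarrow> (f has_real_derivative f' x) (at x)"
    and f'': "(f' has_real_derivative f'') (at t)"
  shows "0 \<le> f''"
proof (rule tendsto_lowerbound)
  show "((\<lambda>y. (f' y - f' t) / (y - t)) \<longlongrightarrow> f'') (at t)"
    using f'' by (simp add: has_field_derivative_iff)
  have "\<forall>\<^sub>F y in at t. y \<in> S"
    using \<open>open S\<close> \<open>t \<in> S\<close> by (simp add: eventually_at_in_open')
  then show "\<forall>\<^sub>F y in at t. 0 \<le> (f' y - f' t) / (y - t)"
  proof eventually_elim
    case (elim y)
    have "0 \<le> (f' y - f' t) * (y - t) / (y - t)\<^sup>2"
      using convex_on_deriv_mono[OF convex \<open>open S\<close> \<open>t \<in> S\<close> elim f'] by simp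
    then show ?case
      by (cases "y = t") (simp_all add: power2_eq_square)
  qed
qed simp

lemma Iset_eq_atLeastAtMost: "0 < a \<Longrightarrow> Iset a b = {a..b}"
  by (auto simp: Iset_def)

lemma c_f_finite:
  assumes "0 < a" "a \<le> b" and convex: "\<And>t. t \<in> {a..b} \<Longrightarrow> 0 \<le> deriv (deriv f) t"
  obtains c where "c_f f a b = ereal (c / 2)" "0 \<le> c"
    "\<And>t. t \<in> {a..b} \<Longrightarrow> c \<le> deriv (deriv f) t"
proof -
  define C where "C = (INF t\<in>{a..b}. ereal (deriv (deriv f) t))"
  have C_le: "C \<le> ereal (deriv (deriv f) t)" if "t \<in> {a..b}" for t
    unfolding C_def using that by (rule INF_lower)
  have "0 \<le> C"
    unfolding C_def using convex by (intro INF_greatest) simp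
  moreover have "C \<noteq> \<infinity>"
    using C_le[of a] assms by auto
  ultimately obtain c where "C = ereal c"
    by (cases C) auto
  with \<open>0 \<le> C\<close> C_le show thesis
    by (intro that[of c]) (simp_all add: c_f_def C_def Iset_eq_atLeastAtMost \<open>0 < a\<close>)
qed

lemma e_f_cases:
  assumes "0 < a" "a \<le> b" and convex: "\<And>t. t \<in> {a..b} \<Longrightarrow> 0 \<le> deriv (deriv f) t"
  obtains (finite) e where "e_f f a b = ereal (e / 2)" "\<And>t. t \<in> {a..b} \<Longrightarrow> deriv (deriv f) t \<le> e"
    | (infinite) "e_f f a b = \<infinity>"
proof -
  define E where "E = (SUP t\<in>{a..b}. ereal (deriv (deriv f) t))"
  have E_ge: "ereal (deriv (deriv f) t) \<le> E" if "t \<in> {a..b}" for t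
    unfolding E_def using that by (rule SUP_upper)
  have "0 \<le> ereal (deriv (deriv f) a)"
    using convex[of a] assms by simp
  also have "\<dots> \<le> E"
    using E_ge[of a] assms by simp
  finally have "0 \<le> E" .
  then consider e where "E = ereal e" | "E = \<infinity>"
    by (cases E) auto
  then show thesis
    using E_ge finite infinite
    by cases (simp_all add: e_f_def E_def Iset_eq_atLeastAtMost \<open>0 < a\<close>)
qed

lemma deriv2_chi_square:
  fixes f :: "real \<Rightarrow> real"
  assumes chi: "\<forall>t>0. f t = (t - 1)\<^sup>2" and "0 < t"
  shows "deriv (deriv f) t = 2"
proof -
  have near: "\<forall>\<^sub>F s in nhds t. 0 < s"
    using \<open>0 < t\<close> eventually_nhds_in_open[of "{0<..}" t] by simp
  have "deriv f s = 2 * (s - 1)" if "0 < s" for s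
  proof -
    have "\<forall>\<^sub>F r in nhds s. f r = (r - 1)\<^sup>2"
      using eventually_nhds_in_open[of "{0<..}" s] \<open>0 < s\<close> chi by (auto elim: eventually_mono)
    then have "deriv f s = deriv (\<lambda>r. (r - 1)\<^sup>2) s"
      by (rule deriv_cong_ev) simp
    also have "\<dots> = 2 * (s - 1)"
      by (rule DERIV_imp_deriv) (auto intro!: derivative_eq_intros)
    finally show ?thesis .
  qed
  then have "deriv (deriv f) t = deriv (\<lambda>s. 2 * (s - 1)) t"
    using near by (intro deriv_cong_ev) (auto elim: eventually_mono)
  also have "\<dots> = 2"
    by (rule DERIV_imp_deriv) (auto intro!: derivative_eq_intros)
  finally show ?thesis .
qed

lemma c_f_e_f_chi_square:
  assumes chi: "\<forall>t>0. f t = (t - 1)\<^sup>2" and "0 < a" "a \<le> b"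
  shows "c_f f a b = 1" and "e_f f a b = 1"
proof -
  have "Iset a b = {a..b}" "{a..b} \<noteq> {}" and deriv2: "\<And>t. t \<in> {a..b} \<Longrightarrow> deriv (deriv f) t = 2"
    using assms deriv2_chi_square[OF chi] by (auto simp: Iset_eq_atLeastAtMost)
  then show "c_f f a b = 1" "e_f f a b = 1"
    by (simp_all add: c_f_def e_f_def one_ereal_def)
qed

(* Only the minorized vector y is required to be sorted, as in Tomic's form of Karamata's inequality. *)
locale antitone_majorization =
  fixes n :: nat and x y :: "nat \<Rightarrow> real"
  assumes antitone: "\<And>i j. 1 \<le> i \<Longrightarrow> i \<le> j \<Longrightarrow> j \<le> n \<Longrightarrow> y j \<le> y i"
    and partial_sums: "\<And>m. m \<le> n \<Longrightarrow> (\<Sum>i=1..m. y i) \<le> (\<Sum>i=1..m. x i)"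
    and total_sum: "(\<Sum>i=1..n. y i) = (\<Sum>i=1..n. x i)"
begin

lemma y_in_range:
  assumes x_range: "\<And>i. i \<in> {1..n} \<Longrightarrow> x i \<in> {a..b}" and i: "i \<in> {1..n}"
  shows "y i \<in> {a..b}"
proof -
  obtain m where n: "n = Suc m"
    using i by (cases n) auto
  have "y 1 \<le> x 1"
    using partial_sums[of 1] i by simp
  moreover have "x n \<le> y n"
    using partial_sums[of m] total_sum by (simp add: n)
  moreover have "y i \<le> y 1" "y n \<le> y i" "x 1 \<le> b" "a \<le> x n"
    using antitone[of 1 i] antitone[of i n] x_range[of 1] x_range[of n] i by auto
  ultimately show ?thesis
    by simp
qed

lemma weighted_gap_nonneg:
  assumes "\<And>i. 1 \<le> i \<Longrightarrow> i < n \<Longrightarrow> w (Suc i) \<le> w i"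
  shows "0 \<le> (\<Sum>i=1..n. w i * (x i - y i))"
  using assms
proof (rule Abel_summation_nonneg)
  show "0 \<le> (\<Sum>i=1..m. x i - y i)" if "m \<le> n" for m
    using partial_sums[OF that] by (simp add: sum_subtractf)
  show "(\<Sum>i=1..n. x i - y i) = 0"
    using total_sum by (simp add: sum_subtractf)
qed

lemma sum_square_diff_le: "(\<Sum>i=1..n. (x i - y i)\<^sup>2) \<le> (\<Sum>i=1..n. (x i)\<^sup>2 - (y i)\<^sup>2)"
proof -
  have "0 \<le> (\<Sum>i=1..n. y i * (x i - y i))"
    using antitone by (intro weighted_gap_nonneg) simp
  moreover have "(x i - y i)\<^sup>2 = (x i)\<^sup>2 - (y i)\<^sup>2 - 2 * (y i * (x i - y i))" for i
    by (simp add: power2_eq_square algebra_simps)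
  ultimately show ?thesis
    by (simp add: sum_subtractf sum_distrib_left[symmetric])
qed

theorem Karamata_inequality:
  fixes k k' k'' :: "real \<Rightarrow> real"
  assumes k': "\<And>t. t \<in> {a..b} \<Longrightarrow> (k has_real_derivative k' t) (at t)"
    and k'': "\<And>t. t \<in> {a..b} \<Longrightarrow> (k' has_real_derivative k'' t) (at t)"
    and convex: "\<And>t. t \<in> {a..b} \<Longrightarrow> 0 \<le> k'' t"
    and x_range: "\<And>i. i \<in> {1..n} \<Longrightarrow> x i \<in> {a..b}"
  shows "(\<Sum>i=1..n. k (y i)) \<le> (\<Sum>i=1..n. k (x i))"
proof -
  have tangent: "k' s * (r - s) \<le> k r - k s" if "r \<in> {a..b}" "s \<in> {a..b}" for r s
    using f''_imp_f'[OF convex_real_interval(5) k' k'' convex] that by blast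
  have k'_mono: "k' s \<le> k' r" if "r \<in> {a..b}" "s \<in> {a..b}" "s < r" for r s
  proof -
    have "0 \<le> (k' r - k' s) * (r - s)"
      using tangent[of r s] tangent[of s r] that by (simp add: algebra_simps)
    then show ?thesis
      using \<open>s < r\<close> by (simp add: zero_le_mult_iff)
  qed
  have y_range: "\<And>i. i \<in> {1..n} \<Longrightarrow> y i \<in> {a..b}"
    using y_in_range[OF x_range] .
  have "0 \<le> (\<Sum>i=1..n. k' (y i) * (x i - y i))"
  proof (rule weighted_gap_nonneg)
    fix i assume "1 \<le> i" "i < n"
    then show "k' (y (Suc i)) \<le> k' (y i)"
      using antitone[of i "Suc i"] y_range[of i] y_range[of "Suc i"] k'_mono
      by (cases "y (Suc i) = y i") force+
  qed
  also have "\<dots> \<le> (\<Sum>i=1..n. k (x i) - k (y i))"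
    using tangent x_range y_range by (intro sum_mono) auto
  finally show ?thesis
    by (simp add: sum_subtractf)
qed

lemma square_gap_nonneg: "0 \<le> (\<Sum>i=1..n. (x i)\<^sup>2 - (y i)\<^sup>2)"
  using sum_square_diff_le by (meson order_trans sum_nonneg zero_le_power2)

lemma square_gap_eq_0_imp_eq:
  assumes "(\<Sum>i=1..n. (x i)\<^sup>2 - (y i)\<^sup>2) = 0" and "i \<in> {1..n}"
  shows "x i = y i"
proof -
  have "(\<Sum>i=1..n. (x i - y i)\<^sup>2) = 0"
    using sum_square_diff_le assms(1) by (simp add: antisym sum_nonneg)
  then show ?thesis
    using assms(2) by (simp add: sum_nonneg_eq_0_iff)
qed

lemma curvature_lower_bound:
  assumes f': "\<And>t. t \<in> {a..b} \<Longrightarrow> (f has_real_derivative f' t) (at t)"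
    and f'': "\<And>t. t \<in> {a..b} \<Longrightarrow> (f' has_real_derivative f'' t) (at t)"
    and lower: "\<And>t. t \<in> {a..b} \<Longrightarrow> c \<le> f'' t"
    and x_range: "\<And>i. i \<in> {1..n} \<Longrightarrow> x i \<in> {a..b}"
  shows "c / 2 * (\<Sum>i=1..n. (x i)\<^sup>2 - (y i)\<^sup>2) \<le> (\<Sum>i=1..n. f (x i) - f (y i))"
proof -
  have "(\<Sum>i=1..n. f (y i) - c / 2 * (y i)\<^sup>2) \<le> (\<Sum>i=1..n. f (x i) - c / 2 * (x i)\<^sup>2)"
    by (rule Karamata_inequality[where k' = "\<lambda>t. f' t - c * t" and k'' = "\<lambda>t. f'' t - c"])
      (use x_range in \<open>auto intro!: derivative_eq_intros f' f'' lower\<close>)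
  then show ?thesis
    by (simp add: sum_subtractf sum_distrib_left algebra_simps)
qed

lemma curvature_upper_bound:
  assumes f': "\<And>t. t \<in> {a..b} \<Longrightarrow> (f has_real_derivative f' t) (at t)"
    and f'': "\<And>t. t \<in> {a..b} \<Longrightarrow> (f' has_real_derivative f'' t) (at t)"
    and upper: "\<And>t. t \<in> {a..b} \<Longrightarrow> f'' t \<le> e"
    and x_range: "\<And>i. i \<in> {1..n} \<Longrightarrow> x i \<in> {a..b}"
  shows "(\<Sum>i=1..n. f (x i) - f (y i)) \<le> e / 2 * (\<Sum>i=1..n. (x i)\<^sup>2 - (y i)\<^sup>2)"
proof -
  have "(\<Sum>i=1..n. e / 2 * (y i)\<^sup>2 - f (y i)) \<le> (\<Sum>i=1..n. e / 2 * (x i)\<^sup>2 - f (x i))"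
    by (rule Karamata_inequality[where k' = "\<lambda>t. e * t - f' t" and k'' = "\<lambda>t. e - f'' t"])
      (use x_range in \<open>auto intro!: derivative_eq_intros f' f'' upper\<close>)
  then show ?thesis
    by (simp add: sum_subtractf sum_distrib_left algebra_simps)
qed

lemma divergence_gap_bounds:
  assumes "0 < a" "a \<le> b"
    and f': "\<And>t. t \<in> {a..b} \<Longrightarrow> (f has_real_derivative deriv f t) (at t)"
    and f'': "\<And>t. t \<in> {a..b} \<Longrightarrow> (deriv f has_real_derivative deriv (deriv f) t) (at t)"
    and convex: "\<And>t. t \<in> {a..b} \<Longrightarrow> 0 \<le> deriv (deriv f) t"
    and x_range: "\<And>i. i \<in> {1..n} \<Longrightarrow> x i \<in> {a..b}"
  defines "S \<equiv> (\<Sum>i=1..n. (x i)\<^sup>2 - (y i)\<^sup>2)" and "D \<equiv> (\<Sum>i=1..n. f (x i) - f (y i))"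
  shows "c_f f a b * ereal S \<le> ereal D" and "ereal D \<le> e_f f a b * ereal S"
    and "0 \<le> c_f f a b * ereal S"
proof -
  obtain c where c: "c_f f a b = ereal (c / 2)" "0 \<le> c"
    "\<And>t. t \<in> {a..b} \<Longrightarrow> c \<le> deriv (deriv f) t"
    using c_f_finite[OF \<open>0 < a\<close> \<open>a \<le> b\<close> convex] by blast
  have "0 \<le> S"
    unfolding S_def by (rule square_gap_nonneg)
  then show "c_f f a b * ereal S \<le> ereal D" "0 \<le> c_f f a b * ereal S"
    using curvature_lower_bound[OF f' f'' c(3) x_range] c(1,2) by (simp_all add: S_def D_def)
  show "ereal D \<le> e_f f a b * ereal S"
  proof (rule e_f_cases[OF \<open>0 < a\<close> \<open>a \<le> b\<close> convex])
    fix e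
    assume "e_f f a b = ereal (e / 2)" "\<And>t. t \<in> {a..b} \<Longrightarrow> deriv (deriv f) t \<le> e"
    then show ?thesis
      using curvature_upper_bound[OF f' f'' _ x_range, of e] by (simp add: S_def D_def)
  next
    assume infinite: "e_f f a b = \<infinity>"
    (* \<infinity> * 0 = 0 in ereal, so the case S = 0 needs x = y. *)
    show ?thesis
    proof (cases "S = 0")
      case True
      then have "D = 0"
        using square_gap_eq_0_imp_eq unfolding S_def D_def by simp
      with True show ?thesis
        by (simp add: zero_ereal_def[symmetric])
    qed (use \<open>0 \<le> S\<close> infinite in simp)
  qed
qed

lemma chi_square_gap:
  assumes chi: "\<forall>t>0. f t = (t - 1)\<^sup>2"
    and pos: "\<And>i. i \<in> {1..n} \<Longrightarrow> 0 < x i \<and> 0 < y i"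
  shows "(\<Sum>i=1..n. f (x i) - f (y i)) = (\<Sum>i=1..n. (x i)\<^sup>2 - (y i)\<^sup>2)"
proof -
  have "(\<Sum>i=1..n. f (x i) - f (y i)) = (\<Sum>i=1..n. (x i)\<^sup>2 - (y i)\<^sup>2 - 2 * (x i - y i))"
    using chi pos by (intro sum.cong) (auto simp: power2_diff)
  also have "\<dots> = (\<Sum>i=1..n. (x i)\<^sup>2 - (y i)\<^sup>2)"
    using total_sum by (simp add: sum_subtractf sum_distrib_left[symmetric])
  finally show ?thesis .
qed

end

lemma sum_le_sum_of_dominating:
  fixes g :: "'a \<Rightarrow> real"
  assumes "finite S" "finite T" "card S = card T"
    and dominate: "\<And>s t. s \<in> S - T \<Longrightarrow> t \<in> T - S \<Longrightarrow> g s \<le> g t"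
  shows "sum g S \<le> sum g T"
proof -
  have "card (S - T) = card (T - S)"
    using card_Diff_subset_Int[of S T] card_Diff_subset_Int[of T S] assms(1-3)
    by (simp add: inf_commute)
  then obtain h where h: "bij_betw h (S - T) (T - S)"
    using finite_same_card_bij[of "S - T" "T - S"] assms(1,2) by auto
  have "sum g (S - T) \<le> sum (g \<circ> h) (S - T)"
    using dominate bij_betwE[OF h] by (intro sum_mono) auto
  also have "\<dots> = sum g (T - S)"
    using sum.reindex_bij_betw[OF h] by simp
  finally show ?thesis
    using sum.Int_Diff[OF assms(1), of g T] sum.Int_Diff[OF assms(2), of g S]
    by (simp add: Int_commute)
qed

lemma sorting_permutation:
  fixes Q :: "nat \<Rightarrow> real"
  obtains \<sigma> where "bij_betw \<sigma> {1..n} {1..n}"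
    and "\<And>i j. 1 \<le> i \<Longrightarrow> i \<le> j \<Longrightarrow> j \<le> n \<Longrightarrow> Q (\<sigma> j) \<le> Q (\<sigma> i)"
proof
  define xs where "xs = sort_key (\<lambda>i. - Q i) [1..<Suc n]"
  have "bij_betw (\<lambda>i. i - 1) {1..n} {..<n}"
    by (rule bij_betw_byWitness[where f' = Suc]) auto
  moreover have "bij_betw ((!) xs) {..<n} {1..n}"
    by (rule bij_betw_nth) (auto simp: xs_def)
  ultimately have "bij_betw ((!) xs \<circ> (\<lambda>i. i - 1)) {1..n} {1..n}"
    by (rule bij_betw_trans)
  then show "bij_betw (\<lambda>i. xs ! (i - 1)) {1..n} {1..n}"
    by (simp add: comp_def)
  have "sorted (map (\<lambda>i. - Q i) xs)" "length xs = n"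
    unfolding xs_def by (rule sorted_sort_key) simp
  then show "Q (xs ! (j - 1)) \<le> Q (xs ! (i - 1))" if "1 \<le> i" "i \<le> j" "j \<le> n" for i j
    using sorted_nth_mono[of "map (\<lambda>i. - Q i) xs" "i - 1" "j - 1"] that by simp
qed

lemma top_sum_sorted:
  fixes Q :: "nat \<Rightarrow> real"
  assumes bij: "bij_betw \<sigma> {1..n} {1..n}"
    and sorted: "\<And>i j. 1 \<le> i \<Longrightarrow> i \<le> j \<Longrightarrow> j \<le> n \<Longrightarrow> Q (\<sigma> j) \<le> Q (\<sigma> i)"
    and "k \<le> n"
  shows "top_sum n Q k = (\<Sum>i=1..k. Q (\<sigma> i))"
proof -
  define T where "T = \<sigma> ` {1..k}"
  have inj: "inj_on \<sigma> {1..k}"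
    using bij \<open>k \<le> n\<close> by (auto simp: bij_betw_def intro: inj_on_subset)
  have T_sub: "T \<subseteq> {1..n}"
    using bij \<open>k \<le> n\<close> unfolding T_def bij_betw_def by auto
  have card_T: "card T = k"
    using card_image[OF inj] by (simp add: T_def)
  have "sum Q S \<le> sum Q T" if S: "S \<subseteq> {1..n}" "card S = k" for S
  proof (rule sum_le_sum_of_dominating)
    show "finite S" "finite T" "card S = card T"
      using S T_sub card_T finite_subset[of _ "{1..n}"] by auto
    fix s t assume s: "s \<in> S - T" and t: "t \<in> T - S"
    obtain j where j: "j \<in> {1..n}" "s = \<sigma> j"
      using S s bij unfolding bij_betw_def by blast
    obtain i where i: "i \<in> {1..k}" "t = \<sigma> i"
      using t unfolding T_def by blast
    have "k < j"
      using s j unfolding T_def by (metis atLeastAtMost_iff image_eqI not_le DiffE)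
    then show "Q s \<le> Q t"
      using sorted[of i j] i j by simp
  qed
  moreover have "finite {sum Q S | S. S \<subseteq> {1..n} \<and> card S = k}"
    by (simp add: setcompr_eq_image finite_subset[of _ "Pow {1..n}"])
  ultimately have "top_sum n Q k = sum Q T"
    unfolding top_sum_def using T_sub card_T by (intro Max_eqI) auto
  also have "\<dots> = (\<Sum>i=1..k. Q (\<sigma> i))"
    using sum.reindex[OF inj] by (simp add: T_def)
  finally show ?thesis .
qed

lemma majorized_sorted_antitone_majorization:
  assumes "pmf_on n P" "pmf_on n Q" and "majorized n P Q"
    and \<sigma>: "bij_betw \<sigma> {1..n} {1..n}" "\<And>i j. 1 \<le> i \<Longrightarrow> i \<le> j \<Longrightarrow> j \<le> n \<Longrightarrow> Q (\<sigma> j) \<le> Q (\<sigma> i)"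
    and \<tau>: "bij_betw \<tau> {1..n} {1..n}" "\<And>i j. 1 \<le> i \<Longrightarrow> i \<le> j \<Longrightarrow> j \<le> n \<Longrightarrow> P (\<tau> j) \<le> P (\<tau> i)"
    and "0 \<le> c"
  shows "antitone_majorization n (\<lambda>i. c * Q (\<sigma> i)) (\<lambda>i. c * P (\<tau> i))"
proof
  show "c * P (\<tau> j) \<le> c * P (\<tau> i)" if "1 \<le> i" "i \<le> j" "j \<le> n" for i j
    using \<tau>(2)[OF that] \<open>0 \<le> c\<close> by (rule mult_left_mono)
  show "(\<Sum>i=1..m. c * P (\<tau> i)) \<le> (\<Sum>i=1..m. c * Q (\<sigma> i))" if "m \<le> n" for m
  proof (cases "m = 0")
    case False
    then have "top_sum n P m \<le> top_sum n Q m"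
      using \<open>majorized n P Q\<close> that by (simp add: majorized_def)
    then show ?thesis
      using top_sum_sorted[of \<sigma> n Q m, OF \<sigma> that] top_sum_sorted[of \<tau> n P m, OF \<tau> that] \<open>0 \<le> c\<close>
      by (simp add: sum_distrib_left[symmetric] mult_left_mono)
  qed simp
  show "(\<Sum>i=1..n. c * P (\<tau> i)) = (\<Sum>i=1..n. c * Q (\<sigma> i))"
    using assms(1,2) sum.reindex_bij_betw[OF \<sigma>(1), of Q] sum.reindex_bij_betw[OF \<tau>(1), of P]
    by (simp add: pmf_on_def sum_distrib_left[symmetric])
qed

lemma sqnorm_rearranged:
  assumes "bij_betw \<sigma> {1..n} {1..n}"
  shows "sqnorm n Q = (\<Sum>i=1..n. (real n * Q (\<sigma> i))\<^sup>2) / (real n)\<^sup>2"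
  using sum.reindex_bij_betw[OF assms, of "\<lambda>j. (Q j)\<^sup>2"]
  by (cases "n = 0") (simp_all add: sqnorm_def power_mult_distrib sum_distrib_left[symmetric])

lemma fdiv_unif_rearranged:
  assumes "bij_betw \<sigma> {1..n} {1..n}"
  shows "fdiv f n Q (unif n) = (\<Sum>i=1..n. f (real n * Q (\<sigma> i))) / real n"
  using sum.reindex_bij_betw[OF assms, of "\<lambda>j. f (real n * Q j)"]
  by (simp add: fdiv_def unif_def sum_divide_distrib[symmetric] mult.commute)

lemma majorized_rearrangement:
  assumes P: "pmf_on n P" and Q: "pmf_on n Q" and maj: "majorized n P Q"
  obtains x y where "antitone_majorization n x y"
    and "\<And>i. i \<in> {1..n} \<Longrightarrow> x i \<in> {real n * Min (Q ` {1..n})..real n * Max (Q ` {1..n})}"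
    and "sqnorm n Q - sqnorm n P = (\<Sum>i=1..n. (x i)\<^sup>2 - (y i)\<^sup>2) / (real n)\<^sup>2"
    and "\<And>f. fdiv f n Q (unif n) - fdiv f n P (unif n) = (\<Sum>i=1..n. f (x i) - f (y i)) / real n"
proof -
  obtain \<sigma> where \<sigma>: "bij_betw \<sigma> {1..n} {1..n}" "\<And>i j. 1 \<le> i \<Longrightarrow> i \<le> j \<Longrightarrow> j \<le> n \<Longrightarrow> Q (\<sigma> j) \<le> Q (\<sigma> i)"
    using sorting_permutation[of n Q] by blast
  obtain \<tau> where \<tau>: "bij_betw \<tau> {1..n} {1..n}" "\<And>i j. 1 \<le> i \<Longrightarrow> i \<le> j \<Longrightarrow> j \<le> n \<Longrightarrow> P (\<tau> j) \<le> P (\<tau> i)"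
    using sorting_permutation[of n P] by blast
  show thesis
  proof (rule that[of "\<lambda>i. real n * Q (\<sigma> i)" "\<lambda>i. real n * P (\<tau> i)"])
    show "antitone_majorization n (\<lambda>i. real n * Q (\<sigma> i)) (\<lambda>i. real n * P (\<tau> i))"
      using majorized_sorted_antitone_majorization[OF P Q maj \<sigma> \<tau>] by simp
    show "real n * Q (\<sigma> i) \<in> {real n * Min (Q ` {1..n})..real n * Max (Q ` {1..n})}"
      if "i \<in> {1..n}" for i
      using bij_betwE[OF \<sigma>(1)] that by (auto intro!: mult_left_mono)
    show "sqnorm n Q - sqnorm n P
        = (\<Sum>i=1..n. (real n * Q (\<sigma> i))\<^sup>2 - (real n * P (\<tau> i))\<^sup>2) / (real n)\<^sup>2"
      using sqnorm_rearranged[OF \<sigma>(1), of Q] sqnorm_rearranged[OF \<tau>(1), of P]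
      by (simp add: sum_subtractf diff_divide_distrib)
    show "fdiv f n Q (unif n) - fdiv f n P (unif n)
        = (\<Sum>i=1..n. f (real n * Q (\<sigma> i)) - f (real n * P (\<tau> i))) / real n" for f
      using fdiv_unif_rearranged[OF \<sigma>(1), of f Q] fdiv_unif_rearranged[OF \<tau>(1), of f P]
      by (simp add: sum_subtractf diff_divide_distrib)
  qed
qed

lemma pmf_on_card_pos: "pmf_on n P \<Longrightarrow> 0 < n"
  by (cases n) (auto simp: pmf_on_def)

lemma pmf_on_Min_pos: "pmf_on n Q \<Longrightarrow> 0 < Min (Q ` {1..n})"
  using pmf_on_card_pos[of n Q] by (auto simp: pmf_on_def)

lemma sqnorm_ge_inverse_card:
  assumes "pmf_on n P"
  shows "1 / real n \<le> sqnorm n P"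
proof -
  have "0 \<le> (\<Sum>i=1..n. (P i - 1 / real n)\<^sup>2)"
    by (simp add: sum_nonneg)
  also have "\<dots> = sqnorm n P - 2 / real n * (\<Sum>i=1..n. P i) + real n * (1 / real n)\<^sup>2"
    by (simp add: sqnorm_def power2_diff sum_subtractf sum.distrib sum_distrib_left)
  finally show ?thesis
    using assms pmf_on_card_pos[OF assms] by (simp add: pmf_on_def power2_eq_square)
qed

lemma sqnorm_le_range:
  assumes "pmf_on n Q" and range: "\<And>i. i \<in> {1..n} \<Longrightarrow> m \<le> Q i \<and> Q i \<le> M"
  shows "sqnorm n Q \<le> m + M - real n * m * M"
proof -
  have "0 \<le> (\<Sum>i=1..n. (Q i - m) * (M - Q i))"
    using range by (intro sum_nonneg) simp
  also have "\<dots> = m + M - sqnorm n Q - real n * m * M"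
    using assms(1)
    by (simp add: pmf_on_def sqnorm_def sum_subtractf sum.distrib sum_distrib_left[symmetric]
        power2_eq_square algebra_simps)
  finally show ?thesis
    by simp
qed

lemma spread_product_le:
  fixes u v \<rho> :: real
  assumes "0 < u" "u \<le> 1" "1 \<le> v" "v \<le> \<rho> * u"
  shows "(1 - u) * (v - 1) \<le> (\<rho> - 1)\<^sup>2 / (4 * \<rho>)"
proof -
  have "0 < \<rho>"
    using assms by (smt (verit) mult_nonpos_nonneg)
  have "(1 - u) * (v - 1) \<le> (1 - u) * (\<rho> * u - 1)"
    using assms by (intro mult_left_mono) auto
  also have "\<dots> \<le> (\<rho> - 1)\<^sup>2 / (4 * \<rho>)"
  proof -
    have "4 * \<rho> * ((1 - u) * (\<rho> * u - 1)) = (\<rho> - 1)\<^sup>2 - (2 * \<rho> * u - \<rho> - 1)\<^sup>2"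
      by (simp add: power2_eq_square algebra_simps)
    also have "\<dots> \<le> (\<rho> - 1)\<^sup>2"
      by simp
    finally show ?thesis
      using \<open>0 < \<rho>\<close> by (simp add: field_simps)
  qed
  finally show ?thesis .
qed

lemma sqnorm_diff_le_ratio_bound:
  assumes P: "pmf_on n P" and Q: "pmf_on n Q"
    and ratio: "Max (Q ` {1..n}) / Min (Q ` {1..n}) \<le> \<rho>"
  shows "sqnorm n Q - sqnorm n P \<le> (\<rho> - 1)\<^sup>2 / (4 * \<rho> * real n)"
proof -
  define qmin qmax where "qmin = Min (Q ` {1..n})" and "qmax = Max (Q ` {1..n})"
  have n: "0 < real n" and "0 < qmin"
    using pmf_on_card_pos[OF Q] pmf_on_Min_pos[OF Q] by (simp_all add: qmin_def)
  have range: "\<And>i. i \<in> {1..n} \<Longrightarrow> qmin \<le> Q i \<and> Q i \<le> qmax"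
    by (simp add: qmin_def qmax_def)
  have "real n * qmin \<le> 1" "1 \<le> real n * qmax"
    using sum_bounded_below[of "{1..n}" qmin Q] sum_bounded_above[of "{1..n}" Q qmax] range Q
    by (auto simp: pmf_on_def)
  moreover have "qmax \<le> \<rho> * qmin"
    using ratio pos_divide_le_eq[OF \<open>0 < qmin\<close>] by (simp add: qmin_def qmax_def)
  then have "real n * qmax \<le> \<rho> * (real n * qmin)"
    using n by (simp add: mult.left_commute)
  ultimately have spread: "(1 - real n * qmin) * (real n * qmax - 1) \<le> (\<rho> - 1)\<^sup>2 / (4 * \<rho>)"
    using n \<open>0 < qmin\<close> by (intro spread_product_le) simp_all
  have "sqnorm n Q - sqnorm n P \<le> qmin + qmax - real n * qmin * qmax - 1 / real n"
    using sqnorm_le_range[OF Q range] sqnorm_ge_inverse_card[OF P] by simp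
  also have "\<dots> = (1 - real n * qmin) * (real n * qmax - 1) / real n"
    using n by (simp add: field_simps)
  also have "\<dots> \<le> (\<rho> - 1)\<^sup>2 / (4 * \<rho>) / real n"
    using n by (intro divide_right_mono[OF spread]) simp
  finally show ?thesis
    by simp
qed

lemma ereal_rescale:
  assumes "0 < k"
  shows "ereal k * E * ereal (s / k\<^sup>2) = E * ereal s * ereal (1 / k)"
  using assms by (cases E rule: ereal_cases; cases "s" rule: linorder_cases[of _ 0])
    (simp_all add: power2_eq_square field_simps)

theorem theorem6:
  fixes n :: nat and P Q :: "nat \<Rightarrow> real" and f :: "real \<Rightarrow> real"
  assumes hP: "pmf_on n P" and hQ: "pmf_on n Q"
    and maj: "majorized n P Q"
    and conv: "convex_on {0<..} f"
    and diff1: "\<forall>x>0. f differentiable (at x)"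
    and diff2: "\<forall>x>0. (deriv f) differentiable (at x)"
    and f1: "f 1 = 0"
  defines "qmax \<equiv> Max (Q ` {1..n})" and "qmin \<equiv> Min (Q ` {1..n})"
  shows
   "(ereal (real n) * e_f f (real n * qmin) (real n * qmax) * ereal (sqnorm n Q - sqnorm n P)
        \<ge> ereal (fdiv f n Q (unif n) - fdiv f n P (unif n))
     \<and> ereal (fdiv f n Q (unif n) - fdiv f n P (unif n))
        \<ge> ereal (real n) * c_f f (real n * qmin) (real n * qmax) * ereal (sqnorm n Q - sqnorm n P)
     \<and> ereal (real n) * c_f f (real n * qmin) (real n * qmax) * ereal (sqnorm n Q - sqnorm n P) \<ge> 0)
   \<and> ((\<forall>t>0. f t = (t - 1)\<^sup>2) \<longrightarrow>
       ereal (real n) * e_f f (real n * qmin) (real n * qmax) * ereal (sqnorm n Q - sqnorm n P)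
        = ereal (fdiv f n Q (unif n) - fdiv f n P (unif n))
     \<and> ereal (fdiv f n Q (unif n) - fdiv f n P (unif n))
        = ereal (real n) * c_f f (real n * qmin) (real n * qmax) * ereal (sqnorm n Q - sqnorm n P))
   \<and> (\<forall>\<rho>::real. \<rho> \<ge> 1 \<and> qmax / qmin \<le> \<rho> \<longrightarrow>
       0 \<le> sqnorm n Q - sqnorm n P
       \<and> sqnorm n Q - sqnorm n P \<le> (\<rho> - 1)\<^sup>2 / (4 * \<rho> * real n))"
proof -
  have n: "0 < real n"
    using pmf_on_card_pos[OF hQ] by simp
  obtain x y where "antitone_majorization n x y"
    and x_range: "\<And>i. i \<in> {1..n} \<Longrightarrow> x i \<in> {real n * qmin..real n * qmax}"
    and sq: "sqnorm n Q - sqnorm n P = (\<Sum>i=1..n. (x i)\<^sup>2 - (y i)\<^sup>2) / (real n)\<^sup>2"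
    and fd: "\<And>g. fdiv g n Q (unif n) - fdiv g n P (unif n) = (\<Sum>i=1..n. g (x i) - g (y i)) / real n"
    using majorized_rearrangement[OF hP hQ maj, folded qmin_def qmax_def] by blast
  interpret antitone_majorization n x y
    by fact
  define S D where "S = (\<Sum>i=1..n. (x i)\<^sup>2 - (y i)\<^sup>2)" and "D = (\<Sum>i=1..n. f (x i) - f (y i))"
  have pos: "0 < real n * qmin"
    using pmf_on_Min_pos[OF hQ] n by (simp add: qmin_def)
  have "x 1 \<in> {real n * qmin..real n * qmax}"
    using x_range n by simp
  then have ab: "real n * qmin \<le> real n * qmax"
    by (meson atLeastAtMost_iff order_trans)
  have in_range_pos: "\<And>t. t \<in> {real n * qmin..real n * qmax} \<Longrightarrow> 0 < t"
    using pos by auto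
  have f': "\<And>t. 0 < t \<Longrightarrow> (f has_real_derivative deriv f t) (at t)"
    and f'': "\<And>t. 0 < t \<Longrightarrow> (deriv f has_real_derivative deriv (deriv f) t) (at t)"
    using diff1 diff2 DERIV_deriv_iff_real_differentiable by blast+
  have convex: "\<And>t. 0 < t \<Longrightarrow> 0 \<le> deriv (deriv f) t"
    using convex_on_imp_deriv2_nonneg[OF conv open_greaterThan _ f' f''] by simp
  note bounds = divergence_gap_bounds[OF pos ab f'[OF in_range_pos] f''[OF in_range_pos]
      convex[OF in_range_pos] x_range, folded S_def D_def]
  have chi_square: "D = S" "c_f f (real n * qmin) (real n * qmax) = 1"
      "e_f f (real n * qmin) (real n * qmax) = 1" if chi: "\<forall>t>0. f t = (t - 1)\<^sup>2"
    using chi_square_gap[OF chi] c_f_e_f_chi_square[OF chi pos ab] x_range y_in_range[OF x_range]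
      in_range_pos
    by (auto simp: S_def D_def)
  have "0 \<le> ereal (1 / real n)"
    by simp
  note rescale_mono = ereal_mult_right_mono[OF _ this]
  have "0 \<le> S"
    unfolding S_def by (rule square_gap_nonneg)
  then show ?thesis
    unfolding sq fd S_def[symmetric] D_def[symmetric] ereal_rescale[OF n]
    using rescale_mono[OF bounds(1)] rescale_mono[OF bounds(2)] rescale_mono[OF bounds(3)]
      chi_square sqnorm_diff_le_ratio_bound[OF hP hQ, unfolded sq, folded S_def] n
    by (simp add: qmin_def qmax_def)
qed

end
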